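(* Let $E$ be a pseudo effect algebra satisfying (RDP) and let $m:E\to\mathbb R$ be a signed measure. Then $m$ is relatively bounded if and only if $m=m_1-m_2$ for some measures $m_1,m_2$ on $E$.
   Context: Pseudo effect algebra: partial algebra $(E;+,0,1)$ such that for all $a,b,c$: (i) $a+b$ and $(a+b)+c$ exist iff $b+c$ and $a+(b+c)$ exist, and then they are equal; (ii) there is exactly one $d$ and one $e$ with $a+d=e+a=1$; (iii) if $a+b$ exists there are $d,e$ with $a+b=d+a=b+e$; (iv) if $1+a$ or $a+1$ exists then $a=0$. Order: $a\le b$ iff $a+c=b$ for some $c$. (RDP): whenever $a_1+a_2=b_1+b_2$ there are $d_1,\dots,d_4$ with $d_1+d_2=a_1$, $d_3+d_4=a_2$, $d_1+d_3=b_1$, $d_2+d_4=b_2$. A signed measure is $m:E\to\mathbb R$ with $m(a+b)=m(a)+m(b)$ whenever $a+b$ is defined; a measure is a signed measure with nonnegative values. A map $m:E\to\mathbb R$ is relatively bounded if $m(W)$ is bounded in $\mathbb R$ for every subset $W\subseteq E$ that is bounded above and below in $E$. *)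

theory Defs
  imports Complex_Main
begin

text \<open>A pseudo effect algebra on the whole type 'a, with partial addition
  psum a b = Some (a+b) when defined, None otherwise.\<close>

definition pea :: "('a \<Rightarrow> 'a \<Rightarrow> 'a option) \<Rightarrow> 'a \<Rightarrow> 'a \<Rightarrow> bool" where
  "pea psum zero one \<longleftrightarrow>
     (\<forall>a b c. Option.bind (psum a b) (\<lambda>ab. psum ab c) = Option.bind (psum b c) (\<lambda>bc. psum a bc)) \<and>
     (\<forall>a. (\<exists>!d. psum a d = Some one) \<and> (\<exists>!e. psum e a = Some one)) \<and>
     (\<forall>a b s. psum a b = Some s \<longrightarrow> (\<exists>d e. psum d a = Some s \<and> psum b e = Some s)) \<and>
     (\<forall>a. (psum one a \<noteq> None \<or> psum a one \<noteq> None) \<longrightarrow> a = zero)"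

definition pea_le :: "('a \<Rightarrow> 'a \<Rightarrow> 'a option) \<Rightarrow> 'a \<Rightarrow> 'a \<Rightarrow> bool" where
  "pea_le psum a b \<longleftrightarrow> (\<exists>c. psum a c = Some b)"

definition RDP :: "('a \<Rightarrow> 'a \<Rightarrow> 'a option) \<Rightarrow> bool" where
  "RDP psum \<longleftrightarrow> (\<forall>a1 a2 b1 b2 s. psum a1 a2 = Some s \<and> psum b1 b2 = Some s \<longrightarrow>
     (\<exists>d1 d2 d3 d4. psum d1 d2 = Some a1 \<and> psum d3 d4 = Some a2 \<and>
                    psum d1 d3 = Some b1 \<and> psum d2 d4 = Some b2))"

definition signed_measure :: "('a \<Rightarrow> 'a \<Rightarrow> 'a option) \<Rightarrow> ('a \<Rightarrow> real) \<Rightarrow> bool" where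
  "signed_measure psum m \<longleftrightarrow> (\<forall>a b s. psum a b = Some s \<longrightarrow> m s = m a + m b)"

definition pea_measure :: "('a \<Rightarrow> 'a \<Rightarrow> 'a option) \<Rightarrow> ('a \<Rightarrow> real) \<Rightarrow> bool" where
  "pea_measure psum m \<longleftrightarrow> signed_measure psum m \<and> (\<forall>a. 0 \<le> m a)"

definition relatively_bounded :: "('a \<Rightarrow> 'a \<Rightarrow> 'a option) \<Rightarrow> ('a \<Rightarrow> real) \<Rightarrow> bool" where
  "relatively_bounded psum m \<longleftrightarrow>
     (\<forall>W. (\<exists>l u. \<forall>w\<in>W. pea_le psum l w \<and> pea_le psum w u) \<longrightarrow>
          bdd_above (m ` W) \<and> bdd_below (m ` W))"

end

theory Submission
  imports Defs
begin

(* Since every element of a pseudo effect algebra E lies between 0 and 1, a map is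
   relatively bounded iff it is bounded on all of E.  A difference of measures is
   bounded by monotonicity, which gives one direction.  Conversely, for a signed
   measure m that is bounded above we form its positive variation
     m+(a) = sup { m b | b <= a }.
   It is subadditive because (RDP) splits every b <= a1 + a2 as b = b1 + b2 with
   b1 <= a1, b2 <= a2; it is superadditive because for x <= a1, y <= a2 the
   conjugation law (iii) produces an element below a1 + a2 of measure m x + m y.
   Hence m+ is a measure, m+ - m is a measure (as m <= m+), and m = m+ - (m+ - m). *)

lemma pea_assoc_right:
  assumes "pea p z one" "p a b = Some ab" "p ab c = Some s"
  shows "\<exists>bc. p b c = Some bc \<and> p a bc = Some s"
proof -
  have "Option.bind (p a b) (\<lambda>ab. p ab c) = Option.bind (p b c) (\<lambda>bc. p a bc)"
    using assms(1) unfolding pea_def by blast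
  with assms(2,3) show ?thesis by (cases "p b c") auto
qed

lemma pea_assoc_left:
  assumes "pea p z one" "p b c = Some bc" "p a bc = Some s"
  shows "\<exists>ab. p a b = Some ab \<and> p ab c = Some s"
proof -
  have "Option.bind (p a b) (\<lambda>ab. p ab c) = Option.bind (p b c) (\<lambda>bc. p a bc)"
    using assms(1) unfolding pea_def by blast
  with assms(2,3) show ?thesis by (cases "p a b") auto
qed

lemma pea_compl_right: "pea p z one \<Longrightarrow> \<exists>!d. p a d = Some one"
  unfolding pea_def by blast

lemma pea_compl_left: "pea p z one \<Longrightarrow> \<exists>!e. p e a = Some one"
  unfolding pea_def by blast

lemma pea_conjugate:
  "pea p z one \<Longrightarrow> p a b = Some s \<Longrightarrow> \<exists>d e. p d a = Some s \<and> p b e = Some s"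
  unfolding pea_def by blast

lemma pea_one_summand_zero:
  "pea p z one \<Longrightarrow> p one a \<noteq> None \<or> p a one \<noteq> None \<Longrightarrow> a = z"
  unfolding pea_def by blast

lemma pea_right_zero:
  assumes P: "pea p z one"
  shows "p a z = Some a"
proof -
  obtain d where d: "p one d = Some one" using pea_compl_right[OF P] by blast
  then have "d = z" using pea_one_summand_zero[OF P, of d] by simp
  with d have one_z: "p one z = Some one" by simp
  obtain e where e: "p e a = Some one" using pea_compl_left[OF P] by blast
  then obtain az where az: "p a z = Some az" "p e az = Some one"
    using pea_assoc_right[OF P e one_z] by blast
  have "az = a" using pea_compl_right[OF P, of e] e az(2) by blast
  with az show ?thesis by simp
qed

lemma pea_left_zero:
  assumes P: "pea p z one"
  shows "p z a = Some a"
proof -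
  obtain e where e: "p e one = Some one" using pea_compl_left[OF P] by blast
  then have "e = z" using pea_one_summand_zero[OF P, of e] by simp
  with e have z_one: "p z one = Some one" by simp
  obtain d where d: "p a d = Some one" using pea_compl_right[OF P] by blast
  then obtain za where za: "p z a = Some za" "p za d = Some one"
    using pea_assoc_left[OF P d z_one] by blast
  have "za = a" using pea_compl_left[OF P, of d] d za(2) by blast
  with za show ?thesis by simp
qed

lemma pea_le_refl: "pea p z one \<Longrightarrow> pea_le p a a"
  using pea_right_zero unfolding pea_le_def by metis

lemma pea_le_bounds:
  assumes "pea p z one"
  shows "pea_le p z a \<and> pea_le p a one"
  using pea_left_zero[OF assms, of a] pea_compl_right[OF assms, of a] unfolding pea_le_def by blast

lemma relatively_bounded_iff_bounded:
  assumes P: "pea p z one"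
  shows "relatively_bounded p m \<longleftrightarrow> bdd_above (range m) \<and> bdd_below (range m)"
proof
  assume rb: "relatively_bounded p m"
  have "\<exists>l u. \<forall>w\<in>UNIV. pea_le p l w \<and> pea_le p w u"
    using pea_le_bounds[OF P] by blast
  with rb show "bdd_above (range m) \<and> bdd_below (range m)"
    unfolding relatively_bounded_def by metis
next
  assume "bdd_above (range m) \<and> bdd_below (range m)"
  then show "relatively_bounded p m"
    unfolding relatively_bounded_def by (meson bdd_above_mono bdd_below_mono image_mono top_greatest)
qed

lemma signed_measure_add: "signed_measure p m \<Longrightarrow> p a b = Some s \<Longrightarrow> m s = m a + m b"
  unfolding signed_measure_def by blast

lemma signed_measure_zero:
  assumes "pea p z one" "signed_measure p m"
  shows "m z = 0"
  using signed_measure_add[OF assms(2) pea_right_zero[OF assms(1), of z]] by simp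

lemma pea_measure_mono: "pea_measure p m \<Longrightarrow> pea_le p a b \<Longrightarrow> m a \<le> m b"
  unfolding pea_measure_def signed_measure_def pea_le_def by force

lemma diff_of_measures_bounded:
  assumes P: "pea p z one" and M1: "pea_measure p m1" and M2: "pea_measure p m2"
  shows "bdd_above (range (\<lambda>x. m1 x - m2 x)) \<and> bdd_below (range (\<lambda>x. m1 x - m2 x))"
proof -
  have "m1 x \<le> m1 one" "m2 x \<le> m2 one" for x
    using pea_measure_mono[OF M1] pea_measure_mono[OF M2] pea_le_bounds[OF P] by blast+
  moreover have "0 \<le> m1 x" "0 \<le> m2 x" for x
    using M1 M2 unfolding pea_measure_def by blast+
  ultimately have "m1 x - m2 x \<le> m1 one" "- m2 one \<le> m1 x - m2 x" for x
    by (smt (verit))+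
  then show ?thesis by (auto simp: bdd_above_def bdd_below_def)
qed

lemma RDP_below_sum:
  assumes "RDP p" "p a b = Some s" "pea_le p c s"
  shows "\<exists>c1 c2. pea_le p c1 a \<and> pea_le p c2 b \<and> p c1 c2 = Some c"
proof -
  obtain c' where "p c c' = Some s" using assms(3) unfolding pea_le_def by blast
  then obtain d1 d2 d3 d4 where "p d1 d2 = Some a" "p d3 d4 = Some b" "p d1 d3 = Some c"
    using assms(1,2) unfolding RDP_def by blast
  then show ?thesis unfolding pea_le_def by blast
qed

text \<open>Conversely, for \<open>x \<le> a\<close> and \<open>y \<le> b\<close> some element below \<open>a + b\<close> has
  measure \<open>m x + m y\<close>: writing \<open>x' + y = d + x'\<close> by axiom (iii), we get
  \<open>a + b = x + x' + y + y' = (x + d) + (x' + y')\<close> and \<open>m d = m y\<close>.\<close>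

lemma measure_of_parts_below_sum:
  assumes P: "pea p z one" and M: "signed_measure p m" and s: "p a b = Some s"
    and "pea_le p x a" "pea_le p y b"
  shows "\<exists>c. pea_le p c s \<and> m c = m x + m y"
proof -
  obtain x' where x: "p x x' = Some a" using assms(4) unfolding pea_le_def by blast
  obtain y' where y: "p y y' = Some b" using assms(5) unfolding pea_le_def by blast
  obtain t where t: "p x' b = Some t" "p x t = Some s" using pea_assoc_right[OF P x s] by blast
  obtain u where u: "p x' y = Some u" "p u y' = Some t" using pea_assoc_left[OF P y t(1)] by blast
  obtain d where d: "p d x' = Some u" using pea_conjugate[OF P u(1)] by blast
  obtain xu where xu: "p x u = Some xu" "p xu y' = Some s" using pea_assoc_left[OF P u(2) t(2)] by blast
  obtain xd where xd: "p x d = Some xd" "p xd x' = Some xu" using pea_assoc_left[OF P d xu(1)] by blast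
  obtain w where "p xd w = Some s" using pea_assoc_right[OF P xd(2) xu(2)] by blast
  then have "pea_le p xd s" unfolding pea_le_def by blast
  moreover have "m d = m y"
    using signed_measure_add[OF M u(1)] signed_measure_add[OF M d] by simp
  ultimately show ?thesis using signed_measure_add[OF M xd(1)] by auto
qed

text \<open>The positive variation \<open>m\<^sup>+(a) = sup {m b | b \<le> a}\<close>; it is a real number
  whenever \<open>m\<close> is bounded above, which is assumed throughout the following context.\<close>

definition pos_variation :: "('a \<Rightarrow> 'a \<Rightarrow> 'a option) \<Rightarrow> ('a \<Rightarrow> real) \<Rightarrow> 'a \<Rightarrow> real" where
  "pos_variation p m a = (SUP b\<in>{b. pea_le p b a}. m b)"

context
  fixes p :: "'a \<Rightarrow> 'a \<Rightarrow> 'a option" and z one :: 'a and m :: "'a \<Rightarrow> real"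
  assumes P: "pea p z one" and bdd: "bdd_above (range m)"
begin

lemma pos_variation_upper: "pea_le p b a \<Longrightarrow> m b \<le> pos_variation p m a"
  unfolding pos_variation_def
  by (rule cSUP_upper) (auto intro: bdd_above_mono[OF bdd])

lemma pos_variation_least:
  "(\<And>b. pea_le p b a \<Longrightarrow> m b \<le> C) \<Longrightarrow> pos_variation p m a \<le> C"
  unfolding pos_variation_def using pea_le_refl[OF P] by (intro cSUP_least) auto

lemma pos_variation_subadditive:
  assumes "RDP p" "signed_measure p m" "p a b = Some s"
  shows "pos_variation p m s \<le> pos_variation p m a + pos_variation p m b"
proof (rule pos_variation_least)
  fix c assume "pea_le p c s"
  then obtain c1 c2 where "pea_le p c1 a" "pea_le p c2 b" "p c1 c2 = Some c"
    using RDP_below_sum[OF assms(1,3)] by blast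
  then show "m c \<le> pos_variation p m a + pos_variation p m b"
    using signed_measure_add[OF assms(2)] pos_variation_upper by (metis add_mono)
qed

text \<open>Superadditivity, from the conjugation law (iii).\<close>

lemma pos_variation_superadditive:
  assumes M: "signed_measure p m" and s: "p a b = Some s"
  shows "pos_variation p m a + pos_variation p m b \<le> pos_variation p m s"
proof -
  have sum_le: "m x + m y \<le> pos_variation p m s" if "pea_le p x a" "pea_le p y b" for x y
    using measure_of_parts_below_sum[OF P M s that] pos_variation_upper by metis
  have "pos_variation p m b \<le> pos_variation p m s - pos_variation p m a"
  proof (rule pos_variation_least)
    fix y assume "pea_le p y b"
    then have "pos_variation p m a \<le> pos_variation p m s - m y"
      using sum_le by (intro pos_variation_least) (simp add: algebra_simps)
    then show "m y \<le> pos_variation p m s - pos_variation p m a" by linarith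
  qed
  then show ?thesis by linarith
qed

lemma pos_variation_measure:
  assumes "RDP p" "signed_measure p m"
  shows "pea_measure p (pos_variation p m)"
proof -
  have "signed_measure p (pos_variation p m)"
    unfolding signed_measure_def
    using pos_variation_subadditive[OF assms] pos_variation_superadditive[OF assms(2)]
    by (meson antisym)
  moreover have "0 \<le> pos_variation p m a" for a
    using pos_variation_upper[of z a] pea_le_bounds[OF P] signed_measure_zero[OF P assms(2)]
    by simp
  ultimately show ?thesis unfolding pea_measure_def by blast
qed

lemma pos_variation_excess_measure:
  assumes "RDP p" "signed_measure p m"
  shows "pea_measure p (\<lambda>x. pos_variation p m x - m x)"
  using pos_variation_measure[OF assms] signed_measure_add[OF assms(2)]
    pos_variation_upper[OF pea_le_refl[OF P]]
  unfolding pea_measure_def signed_measure_def by auto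

end

theorem proposition3p3:
  fixes psum :: "'a \<Rightarrow> 'a \<Rightarrow> 'a option" and zero one :: 'a and m :: "'a \<Rightarrow> real"
  assumes "pea psum zero one" and "RDP psum" and "signed_measure psum m"
  shows "relatively_bounded psum m \<longleftrightarrow>
         (\<exists>m1 m2. pea_measure psum m1 \<and> pea_measure psum m2 \<and> m = (\<lambda>x. m1 x - m2 x))"
proof
  assume "relatively_bounded psum m"
  then have bdd: "bdd_above (range m)"
    by (simp add: relatively_bounded_iff_bounded[OF assms(1)])
  let ?m1 = "pos_variation psum m" and ?m2 = "\<lambda>x. pos_variation psum m x - m x"
  have "pea_measure psum ?m1" "pea_measure psum ?m2"
    using pos_variation_measure[OF assms(1) bdd assms(2,3)]
      pos_variation_excess_measure[OF assms(1) bdd assms(2,3)] by auto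
  moreover have "m = (\<lambda>x. ?m1 x - ?m2 x)" by simp
  ultimately show "\<exists>m1 m2. pea_measure psum m1 \<and> pea_measure psum m2 \<and> m = (\<lambda>x. m1 x - m2 x)"
    by blast
next
  assume "\<exists>m1 m2. pea_measure psum m1 \<and> pea_measure psum m2 \<and> m = (\<lambda>x. m1 x - m2 x)"
  then obtain m1 m2 where "pea_measure psum m1" "pea_measure psum m2" "m = (\<lambda>x. m1 x - m2 x)"
    by blast
  then show "relatively_bounded psum m"
    by (simp add: relatively_bounded_iff_bounded[OF assms(1)] diff_of_measures_bounded[OF assms(1)])
qed

end
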